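(* Consider the composite problem, the Stochastic Decoupling Method and the gradient-estimator condition described in the context, with $f$ convex and $L$-smooth and $g_1,\dots,g_m,R$ proper closed convex. Take a gradient estimator that satisfies part (a) of the gradient-estimator condition with constants $\eta_0,\omega$ and sequence $\{\mathcal M^t\}$, a stepsize $\eta\le\eta_0$, and an optimum $x^*$ (with $y_1^*,\dots,y_m^*$) satisfying the optimality assumption. Then, with probability $1$, $D_f(x^t,x^* )\to0$ as $t\to\infty$.
   Context: Problem: $\min_{x\in\mathbb{R}^d}f(x)+\frac1m\sum_{j=1}^mg_j(x)+R(x)$ with $f:\mathbb{R}^d\to\mathbb{R}$ differentiable, convex and $L$-smooth ($f(x)\le f(y)+\langle\nabla f(y),x-y\rangle+\frac L2\|x-y\|^2$), minimizer set nonempty. $D_f(x,y):=f(x)-f(y)-\langle\nabla f(y),x-y\rangle$; $\mathrm{prox}_{\eta h}(x):=\arg\min_u\{h(u)+\frac1{2\eta}\|u-x\|^2\}$. Optimality assumption: $x^*$ is a minimizer and there are $y_j^*\in\partial g_j(x^* )$, $r^*\in\partial R(x^* )$ with $\nabla f(x^* )+\frac1m\sum_jy_j^*+r^*=0$. Stochastic Decoupling Method: stepsize $\eta>0$, probabilities $p_j>0$ summing to 1, $\eta_j:=\eta/(mp_j)$; deterministic start $x^0,y_1^0,\dots,y_m^0$, $y^0:=\frac1m\sum_jy_j^0$. For $t=0,1,\dots$: $v^t$ produced by a gradient estimator; $z^t=\mathrm{prox}_{\eta R}(x^t-\eta v^t-\eta y^t)$; draw $j$ with $\Pr(j=k)=p_k$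 independently of the past; $x^{t+1}=\mathrm{prox}_{\eta_jg_j}(z^t+\eta_jy_j^t)$; $y_j^{t+1}=y_j^t+\frac1{\eta_j}(z^t-x^{t+1})$, $y_k^{t+1}=y_k^t$ ($k\ne j$); $y^{t+1}=y^t+\frac1m(y_j^{t+1}-y_j^t)$. Gradient-estimator condition part (a): with $w^t:=x^t-\eta v^t$, $w^*:=x^*-\eta\nabla f(x^* )$, there are $\eta_0>0$, $\omega>0$ and a nonnegative sequence $\{\mathcal M^t\}$ such that for every $\eta\le\eta_0$ and all $t$: $\mathbb{E}\|w^t-w^*\|^2+\mathcal M^{t+1}\le\mathbb{E}\|x^t-x^*\|^2-\omega\eta\mathbb{E}D_f(x^t,x^* )+\mathcal M^t$. *)

theory Defs
  imports "HOL-Probability.Probability"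
begin

definition proper_fun :: "('v::euclidean_space \<Rightarrow> ereal) \<Rightarrow> bool" where
  "proper_fun h \<longleftrightarrow> (\<forall>x. h x \<noteq> -\<infinity>) \<and> (\<exists>x. h x \<noteq> \<infinity>)"

definition epigraph :: "('v::euclidean_space \<Rightarrow> ereal) \<Rightarrow> ('v \<times> real) set" where
  "epigraph h = {(x, r). h x \<le> ereal r}"

definition closed_fun :: "('v::euclidean_space \<Rightarrow> ereal) \<Rightarrow> bool" where
  "closed_fun h \<longleftrightarrow> closed (epigraph h)"

definition convex_fun :: "('v::euclidean_space \<Rightarrow> ereal) \<Rightarrow> bool" where
  "convex_fun h \<longleftrightarrow> convex (epigraph h)"

definition proper_closed_convex :: "('v::euclidean_space \<Rightarrow> ereal) \<Rightarrow> bool" where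
  "proper_closed_convex h \<longleftrightarrow> proper_fun h \<and> closed_fun h \<and> convex_fun h"

definition subdiff :: "('v::euclidean_space \<Rightarrow> ereal) \<Rightarrow> 'v \<Rightarrow> 'v set" where
  "subdiff h x = {s. h x \<noteq> \<infinity> \<and> (\<forall>u. h x + ereal (s \<bullet> (u - x)) \<le> h u)}"

text \<open>\<open>is_prox h \<eta> x u\<close>: \<open>u\<close> is a minimiser of \<open>h(u) + \<parallel>u - x\<parallel>^2/(2\<eta>)\<close>, i.e.
  \<open>u = prox_{\<eta> h}(x)\<close> (the minimiser is unique for proper closed convex h).\<close>
definition is_prox :: "('v::euclidean_space \<Rightarrow> ereal) \<Rightarrow> real \<Rightarrow> 'v \<Rightarrow> 'v \<Rightarrow> bool" where
  "is_prox h \<eta> x u \<longleftrightarrow>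
     (\<forall>w. h u + ereal ((norm (u - x))\<^sup>2 / (2 * \<eta>)) \<le> h w + ereal ((norm (w - x))\<^sup>2 / (2 * \<eta>)))"

definition bregman :: "('v::euclidean_space \<Rightarrow> real) \<Rightarrow> ('v \<Rightarrow> 'v) \<Rightarrow> 'v \<Rightarrow> 'v \<Rightarrow> real" where
  "bregman f gf x y = f x - f y - gf y \<bullet> (x - y)"

definition objective :: "('v::euclidean_space \<Rightarrow> real) \<Rightarrow> nat \<Rightarrow> (nat \<Rightarrow> 'v \<Rightarrow> ereal)
    \<Rightarrow> ('v \<Rightarrow> ereal) \<Rightarrow> 'v \<Rightarrow> ereal" where
  "objective f m g R x = ereal (f x) + (\<Sum>k<m. g k x) / ereal (real m) + R x"

end

theory Submission
  imports Defs
begin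

(*
  With \<eta>_k = \<eta> / (m p_k), consider the Lyapunov function
    Q_t = |x_t - xs|^2 + sum_k \<eta>_k^2 |y_k^t - ys_k|^2.
  Firm nonexpansiveness of the g_k-prox bounds Q_(t+1) on the event {j_t = k} by a quantity B_k
  known at time t. Averaging over the independent index j_t, firm nonexpansiveness of the R-prox
  and the optimality condition give E Q_(t+1) <= E |w_t - w*|^2 + E sum_k \<eta>_k^2 |y_k^t - ys_k|^2.
  By condition (a) the potential E Q_t + M^t therefore drops by at least \<omega> \<eta> E D_f(x_t, xs) in
  each step, so sum_t E D_f(x_t, xs) is finite. By monotone convergence sum_t D_f(x_t, xs) is
  finite almost surely, and its terms tend to 0.
*)

section \<open>Proximal maps of proper convex functions\<close>

lemma is_prox_finite:
  assumes "is_prox h \<eta> a u" and "proper_fun h"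
  shows "\<bar>h u\<bar> \<noteq> \<infinity>"
proof -
  obtain w where w: "h w \<noteq> \<infinity>" using \<open>proper_fun h\<close> unfolding proper_fun_def by auto
  have "h u + ereal ((norm (u - a))\<^sup>2 / (2 * \<eta>)) \<le> h w + ereal ((norm (w - a))\<^sup>2 / (2 * \<eta>))"
    using assms(1) unfolding is_prox_def by blast
  then have "h u \<noteq> \<infinity>" using w by auto
  then show ?thesis using \<open>proper_fun h\<close> unfolding proper_fun_def by auto
qed

lemma nonneg_of_nonneg_plus_small_multiples:
  fixes c K :: real
  assumes "\<And>s. 0 < s \<Longrightarrow> s \<le> 1 \<Longrightarrow> 0 \<le> c + s * K"
  shows "0 \<le> c"
proof (rule tendsto_lowerbound)
  show "((\<lambda>s. c + s * K) \<longlongrightarrow> c) (at_right 0)"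
    by (auto intro!: tendsto_eq_intros)
  show "\<forall>\<^sub>F s in at_right 0. 0 \<le> c + s * K"
    using eventually_at_right_real[of 0 1] assms by (auto elim: eventually_mono)
qed simp

lemma convex_fun_segment_le:
  assumes "convex_fun h" and "h u = ereal hu" and "h w = ereal hw" and "0 \<le> s" and "s \<le> 1"
  shows "h (u + s *\<^sub>R (w - u)) \<le> ereal ((1 - s) * hu + s * hw)"
proof -
  have "(1 - s) *\<^sub>R (u, hu) + s *\<^sub>R (w, hw) \<in> epigraph h"
    using \<open>convex_fun h\<close> unfolding convex_fun_def
    by (rule convexD) (use assms in \<open>auto simp: epigraph_def\<close>)
  then show ?thesis by (simp add: epigraph_def algebra_simps)
qed

lemma is_prox_subdiff:
  assumes prox: "is_prox h \<eta> a u" and "proper_fun h" and "convex_fun h" and "\<eta> > 0"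
  shows "(1 / \<eta>) *\<^sub>R (a - u) \<in> subdiff h u"
proof -
  obtain hu where hu: "h u = ereal hu"
    using is_prox_finite[OF prox \<open>proper_fun h\<close>] by (cases "h u") auto
  have "hu + ((1 / \<eta>) *\<^sub>R (a - u)) \<bullet> (w - u) \<le> hw" if hw: "h w = ereal hw" for w hw
  proof -
    define d e where "d = u - a" and "e = w - u"
    have "0 \<le> (hw - hu + (d \<bullet> e) / \<eta>) + s * ((norm e)\<^sup>2 / (2 * \<eta>))"
      if s: "0 < s" "s \<le> 1" for s
    proof -
      have "h u + ereal ((norm d)\<^sup>2 / (2 * \<eta>))
          \<le> h (u + s *\<^sub>R e) + ereal ((norm (d + s *\<^sub>R e))\<^sup>2 / (2 * \<eta>))"
        using prox unfolding is_prox_def d_def by (metis diff_add_eq)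
      also have "\<dots> \<le> ereal ((1 - s) * hu + s * hw) + ereal ((norm (d + s *\<^sub>R e))\<^sup>2 / (2 * \<eta>))"
        using convex_fun_segment_le[OF \<open>convex_fun h\<close> hu hw] s by (intro add_right_mono) (simp add: e_def)
      finally have "hu + (norm d)\<^sup>2 / (2 * \<eta>)
          \<le> (1 - s) * hu + s * hw + (norm (d + s *\<^sub>R e))\<^sup>2 / (2 * \<eta>)"
        unfolding hu by simp
      moreover have "(norm (d + s *\<^sub>R e))\<^sup>2 = (norm d)\<^sup>2 + 2 * s * (d \<bullet> e) + s\<^sup>2 * (norm e)\<^sup>2"
        using dot_norm[of d "s *\<^sub>R e"] by (simp add: power_mult_distrib)
      ultimately have "0 \<le> s * (hw - hu) + (2 * s * (d \<bullet> e) + s\<^sup>2 * (norm e)\<^sup>2) / (2 * \<eta>)"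
        by (simp add: add_divide_distrib algebra_simps)
      also have "\<dots> = s * ((hw - hu + (d \<bullet> e) / \<eta>) + s * ((norm e)\<^sup>2 / (2 * \<eta>)))"
        using \<open>\<eta> > 0\<close> by (simp add: field_simps power2_eq_square)
      finally show ?thesis using s by (simp add: zero_le_mult_iff)
    qed
    then have "0 \<le> hw - hu + (d \<bullet> e) / \<eta>"
      by (rule nonneg_of_nonneg_plus_small_multiples)
    moreover have "(d \<bullet> e) / \<eta> = - (((1 / \<eta>) *\<^sub>R (a - u)) \<bullet> (w - u))"
      using \<open>\<eta> > 0\<close> by (simp add: d_def e_def inner_diff_left inner_diff_right inner_commute field_simps)
    ultimately show ?thesis by linarith
  qed
  then have "h u + ereal (((1 / \<eta>) *\<^sub>R (a - u)) \<bullet> (w - u)) \<le> h w" for w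
    using \<open>proper_fun h\<close> unfolding proper_fun_def hu
    by (cases "h w") (auto simp del: inner_scaleR_left)
  then show ?thesis
    unfolding subdiff_def using hu by simp
qed

lemma subdiff_monotone:
  assumes "proper_fun h" and s1: "s1 \<in> subdiff h u1" and s2: "s2 \<in> subdiff h u2"
  shows "0 \<le> (s1 - s2) \<bullet> (u1 - u2)"
proof -
  have "\<bar>h u1\<bar> \<noteq> \<infinity>" "\<bar>h u2\<bar> \<noteq> \<infinity>"
    using assms unfolding subdiff_def proper_fun_def by auto
  then obtain a1 a2 where a: "h u1 = ereal a1" "h u2 = ereal a2"
    by (metis ereal_real')
  have "h u1 + ereal (s1 \<bullet> (u2 - u1)) \<le> h u2" "h u2 + ereal (s2 \<bullet> (u1 - u2)) \<le> h u1"
    using s1 s2 unfolding subdiff_def by blast+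
  then show ?thesis unfolding a by (simp add: inner_diff_left inner_diff_right)
qed

lemma is_prox_firm_nonexpansive:
  assumes prox: "is_prox h \<eta> a u" and r: "r \<in> subdiff h c"
    and "proper_fun h" and "convex_fun h" and "\<eta> > 0"
  shows "(norm (u - c))\<^sup>2 + (norm (a - u - \<eta> *\<^sub>R r))\<^sup>2 \<le> (norm (a - c - \<eta> *\<^sub>R r))\<^sup>2"
proof -
  define b d where "b = a - u - \<eta> *\<^sub>R r" and "d = u - c"
  have "(1 / \<eta>) *\<^sub>R (a - u) - r = (1 / \<eta>) *\<^sub>R b"
    using \<open>\<eta> > 0\<close> by (simp add: b_def algebra_simps)
  then have "0 \<le> (1 / \<eta>) * (b \<bullet> d)"
    using subdiff_monotone[OF \<open>proper_fun h\<close> is_prox_subdiff[OF assms(1,3-5)] r]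
    by (simp add: d_def)
  then have "0 \<le> b \<bullet> d"
    using \<open>\<eta> > 0\<close> by (simp add: zero_le_divide_iff)
  moreover have "a - c - \<eta> *\<^sub>R r = b + d" by (simp add: b_def d_def)
  ultimately show ?thesis
    unfolding b_def[symmetric] d_def[symmetric]
    by (simp add: power2_norm_eq_inner inner_add_left inner_add_right inner_commute)
qed

lemma is_prox_nonexpansive:
  assumes "is_prox h \<eta> a1 u1" and "is_prox h \<eta> a2 u2"
    and "proper_fun h" and "convex_fun h" and "\<eta> > 0"
  shows "norm (u1 - u2) \<le> norm (a1 - a2)"
proof -
  define r where "r = (1 / \<eta>) *\<^sub>R (a2 - u2)"
  have "(norm (u1 - u2))\<^sup>2 + (norm (a1 - u1 - \<eta> *\<^sub>R r))\<^sup>2 \<le> (norm (a1 - u2 - \<eta> *\<^sub>R r))\<^sup>2"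
    using is_prox_firm_nonexpansive[OF assms(1) is_prox_subdiff[OF assms(2-5)] assms(3-5)]
    by (simp add: r_def)
  moreover have "a1 - u2 - \<eta> *\<^sub>R r = a1 - a2"
    using \<open>\<eta> > 0\<close> by (simp add: r_def)
  ultimately have "(norm (u1 - u2))\<^sup>2 + (norm (a1 - u1 - \<eta> *\<^sub>R r))\<^sup>2 \<le> (norm (a1 - a2))\<^sup>2"
    by (simp only:)
  then have "(norm (u1 - u2))\<^sup>2 \<le> (norm (a1 - a2))\<^sup>2"
    using zero_le_power2[of "norm (a1 - u1 - \<eta> *\<^sub>R r)"] by linarith
  then show ?thesis by (rule power2_le_imp_le) simp
qed

lemma is_prox_step_le:
  assumes "is_prox h \<eta> (w - \<eta> *\<^sub>R q) u" and "r \<in> subdiff h c"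
    and "proper_fun h" and "convex_fun h" and "\<eta> > 0"
  shows "(norm (u - c))\<^sup>2 + 2 * \<eta> * ((u - c) \<bullet> (q + r)) \<le> (norm (w - c))\<^sup>2"
proof -
  define d e where "d = u - c" and "e = w - c"
  have "w - \<eta> *\<^sub>R q - u - \<eta> *\<^sub>R r = (e - \<eta> *\<^sub>R (q + r)) - d"
    and "w - \<eta> *\<^sub>R q - c - \<eta> *\<^sub>R r = e - \<eta> *\<^sub>R (q + r)"
    by (simp_all add: d_def e_def algebra_simps)
  with is_prox_firm_nonexpansive[OF assms]
  have "(norm d)\<^sup>2 + (norm (e - \<eta> *\<^sub>R (q + r) - d))\<^sup>2 \<le> (norm (e - \<eta> *\<^sub>R (q + r)))\<^sup>2"
    by (simp add: d_def)
  moreover have "0 \<le> (norm (e - d))\<^sup>2" by simp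
  ultimately show ?thesis
    unfolding d_def[symmetric] e_def[symmetric]
    by (simp add: power2_norm_eq_inner inner_diff_left inner_diff_right inner_commute algebra_simps)
qed

lemma measurable_is_prox:
  assumes "proper_fun h" and "convex_fun h" and "\<eta> > 0"
    and a: "a \<in> borel_measurable M" and u: "\<And>\<xi>. \<xi> \<in> space M \<Longrightarrow> is_prox h \<eta> (a \<xi>) (u \<xi>)"
  shows "u \<in> borel_measurable M"
proof -
  define S where "S = {b. \<exists>v. is_prox h \<eta> b v}"
  define prox where "prox b = (SOME v. is_prox h \<eta> b v)" for b
  have prox: "is_prox h \<eta> b (prox b)" if "b \<in> S" for b
    using that unfolding S_def prox_def by (auto intro: someI_ex)
  have "1-lipschitz_on S prox"
    using is_prox_nonexpansive[OF prox prox assms(1-3)] by (intro lipschitz_onI) (auto simp: dist_norm)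
  then have "prox \<in> borel_measurable (restrict_space borel S)"
    by (intro borel_measurable_continuous_on_restrict lipschitz_on_continuous_on)
  moreover have "a \<in> measurable M (restrict_space borel S)"
    using a u by (intro measurable_restrict_space2) (auto simp: S_def)
  ultimately have "(\<lambda>\<xi>. prox (a \<xi>)) \<in> borel_measurable M"
    by (rule measurable_compose[rotated])
  moreover have "u \<xi> = prox (a \<xi>)" if "\<xi> \<in> space M" for \<xi>
  proof -
    have "a \<xi> \<in> S" using u[OF that] by (auto simp: S_def)
    from is_prox_nonexpansive[OF u[OF that] prox[OF this] assms(1-3)] show ?thesis by simp
  qed
  ultimately show ?thesis by (simp cong: measurable_cong)
qed

lemma bregman_nonneg:
  assumes grad: "\<And>u. (f has_derivative (\<lambda>h. gf u \<bullet> h)) (at u)" and "convex_on UNIV f"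
  shows "0 \<le> bregman f gf u w"
proof -
  define \<phi> where "\<phi> s = f (w + s *\<^sub>R (u - w))" for s :: real
  have "convex_on UNIV \<phi>"
  proof (rule convex_onI)
    fix t s1 s2 :: real
    assume "0 < t" "t < 1"
    moreover have "w + ((1 - t) *\<^sub>R s1 + t *\<^sub>R s2) *\<^sub>R (u - w)
        = (1 - t) *\<^sub>R (w + s1 *\<^sub>R (u - w)) + t *\<^sub>R (w + s2 *\<^sub>R (u - w))"
      by (simp add: algebra_simps)
    ultimately show "\<phi> ((1 - t) *\<^sub>R s1 + t *\<^sub>R s2) \<le> (1 - t) * \<phi> s1 + t * \<phi> s2"
      unfolding \<phi>_def using convex_onD[OF \<open>convex_on UNIV f\<close>, of t] by auto
  qed simp
  moreover have "(\<phi> has_real_derivative (gf w \<bullet> (u - w))) (at 0)"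
  proof -
    have "((\<lambda>s. w + s *\<^sub>R (u - w)) has_derivative (\<lambda>s. s *\<^sub>R (u - w))) (at 0)"
      by (auto intro!: derivative_eq_intros)
    from has_derivative_compose[OF this grad[of "w + 0 *\<^sub>R (u - w)"]]
    have "(\<phi> has_derivative (\<lambda>s. s * (gf w \<bullet> (u - w)))) (at 0)"
      by (simp add: \<phi>_def[abs_def] o_def)
    then show ?thesis
      unfolding has_field_derivative_def by (rule has_derivative_eq_rhs) (simp add: fun_eq_iff)
  qed
  ultimately have "(gf w \<bullet> (u - w)) * (1 - 0) \<le> \<phi> 1 - \<phi> 0"
    by (intro convex_on_imp_above_tangent[where A = UNIV]) auto
  then show ?thesis by (simp add: \<phi>_def bregman_def)
qed

section \<open>Expectations and almost sure convergence\<close>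

lemma nn_integral_indicator_indep:
  fixes G :: "'a \<Rightarrow> ennreal"
  assumes sub: "subalgebra M F" and S: "S \<in> sets M"
    and indep: "\<And>A. A \<in> sets F \<Longrightarrow> emeasure M (S \<inter> A) = c * emeasure M A"
    and G: "G \<in> borel_measurable F"
  shows "(\<integral>\<^sup>+\<xi>. indicator S \<xi> * G \<xi> \<partial>M) = c * (\<integral>\<^sup>+\<xi>. G \<xi> \<partial>M)"
proof -
  have sets_F: "sets F \<subseteq> sets M"
    using sub by (auto simp: subalgebra_def)
  have G_M: "G \<in> borel_measurable M" using measurable_from_subalg[OF sub G] .
  have G_restr: "G \<in> borel_measurable (restr_to_subalg M F)"
    using G by (subst measurable_cong_sets[OF sets_restr_to_subalg[OF sub] refl])
  \<comment> \<open>on \<open>F\<close>, the measure \<open>A \<mapsto> M (S \<inter> A)\<close> is the restriction of \<open>M\<close> scaled by \<open>c\<close>\<close>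
  have "(\<integral>\<^sup>+\<xi>. indicator S \<xi> * G \<xi> \<partial>M) = (\<integral>\<^sup>+\<xi>. G \<xi> \<partial>density M (indicator S))"
    using S G_M by (simp add: nn_integral_density)
  also have "\<dots> = (\<integral>\<^sup>+\<xi>. G \<xi> \<partial>scale_measure c (restr_to_subalg M F))"
  proof (rule nn_integral_subalgebra[symmetric])
    show "G \<in> borel_measurable (scale_measure c (restr_to_subalg M F))"
      using G_restr by (subst measurable_cong_sets[OF sets_scale_measure refl])
    show "sets (scale_measure c (restr_to_subalg M F)) \<subseteq> sets (density M (indicator S))"
      using sets_F by (simp add: sets_restr_to_subalg[OF sub])
    show "space (scale_measure c (restr_to_subalg M F)) = space (density M (indicator S))"
      by (simp add: space_scale_measure space_restr_to_subalg)
    fix A assume "A \<in> sets (scale_measure c (restr_to_subalg M F))"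
    then have A: "A \<in> sets F" by (simp add: sets_restr_to_subalg[OF sub])
    with sets_F have "emeasure (density M (indicator S)) A = emeasure M (S \<inter> A)"
      using S by (auto simp: emeasure_density nn_integral_indicator indicator_inter_arith[symmetric]
          simp del: indicator_inter_arith)
    then show "emeasure (scale_measure c (restr_to_subalg M F)) A = emeasure (density M (indicator S)) A"
      using A by (simp add: emeasure_restr_to_subalg[OF sub] indep)
  qed
  also have "\<dots> = c * (\<integral>\<^sup>+\<xi>. G \<xi> \<partial>M)"
    using G_restr by (simp add: nn_integral_scale_measure nn_integral_subalgebra2[OF sub G])
  finally show ?thesis .
qed

lemma nn_integral_random_index_le:
  fixes H :: "'a \<Rightarrow> ennreal" and B :: "'i \<Rightarrow> 'a \<Rightarrow> ennreal"
  assumes sub: "subalgebra M F" and "finite I"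
    and J_sets: "\<And>k. {\<xi> \<in> space M. J \<xi> = k} \<in> sets M"
    and indep: "\<And>k A. k \<in> I \<Longrightarrow> A \<in> sets F \<Longrightarrow>
      emeasure M ({\<xi> \<in> space M. J \<xi> = k} \<inter> A) = c k * emeasure M A"
    and J_range: "\<And>\<xi>. \<xi> \<in> space M \<Longrightarrow> J \<xi> \<in> I"
    and B: "\<And>k. k \<in> I \<Longrightarrow> B k \<in> borel_measurable F"
    and H: "\<And>\<xi>. \<xi> \<in> space M \<Longrightarrow> H \<xi> \<le> B (J \<xi>) \<xi>"
  shows "(\<integral>\<^sup>+\<xi>. H \<xi> \<partial>M) \<le> (\<integral>\<^sup>+\<xi>. (\<Sum>k\<in>I. c k * B k \<xi>) \<partial>M)"
proof -
  define S where "S k = {\<xi> \<in> space M. J \<xi> = k}" for k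
  have B_M: "B k \<in> borel_measurable M" if "k \<in> I" for k
    using measurable_from_subalg[OF sub B[OF that]] .
  have "(\<integral>\<^sup>+\<xi>. H \<xi> \<partial>M) \<le> (\<integral>\<^sup>+\<xi>. (\<Sum>k\<in>I. indicator (S k) \<xi> * B k \<xi>) \<partial>M)"
  proof (rule nn_integral_mono)
    fix \<xi> assume \<xi>: "\<xi> \<in> space M"
    have "(\<Sum>k\<in>I. indicator (S k) \<xi> * B k \<xi>) = (\<Sum>k\<in>I. if k = J \<xi> then B k \<xi> else 0)"
      by (rule sum.cong) (auto simp: S_def \<xi>)
    also have "\<dots> = B (J \<xi>) \<xi>"
      using \<open>finite I\<close> J_range[OF \<xi>] by simp
    finally show "H \<xi> \<le> (\<Sum>k\<in>I. indicator (S k) \<xi> * B k \<xi>)"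
      using H[OF \<xi>] by simp
  qed
  also have "\<dots> = (\<Sum>k\<in>I. \<integral>\<^sup>+\<xi>. indicator (S k) \<xi> * B k \<xi> \<partial>M)"
    using J_sets B_M by (intro nn_integral_sum) (simp add: S_def)
  also have "\<dots> = (\<Sum>k\<in>I. \<integral>\<^sup>+\<xi>. c k * B k \<xi> \<partial>M)"
    using J_sets indep B B_M
    by (intro sum.cong refl) (simp add: S_def nn_integral_indicator_indep[OF sub] nn_integral_cmult)
  also have "\<dots> = (\<integral>\<^sup>+\<xi>. (\<Sum>k\<in>I. c k * B k \<xi>) \<partial>M)"
    using B_M by (intro nn_integral_sum[symmetric]) simp
  finally show ?thesis .
qed

lemma suminf_le_of_descent:
  fixes \<Psi> d :: "nat \<Rightarrow> ennreal"
  assumes "\<And>t. \<Psi> (Suc t) + d t \<le> \<Psi> t"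
  shows "(\<Sum>t. d t) \<le> \<Psi> 0"
proof -
  have partial: "\<Psi> n + (\<Sum>t<n. d t) \<le> \<Psi> 0" for n
  proof (induction n)
    case (Suc n)
    have "\<Psi> (Suc n) + (\<Sum>t<Suc n. d t) = (\<Psi> (Suc n) + d n) + (\<Sum>t<n. d t)"
      by (simp add: ac_simps)
    also have "\<dots> \<le> \<Psi> n + (\<Sum>t<n. d t)"
      using assms by (rule add_right_mono)
    finally show ?case using Suc.IH by (rule order_trans)
  qed simp
  have "(\<Sum>t<n. d t) \<le> \<Psi> 0" for n
    by (rule order_trans[OF add_increasing[OF zero_le order_refl] partial])
  then show ?thesis by (intro suminf_le_const summableI)
qed

lemma AE_LIMSEQ_zero_if_suminf_nn_integral_finite:
  fixes D :: "nat \<Rightarrow> 'a \<Rightarrow> real"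
  assumes D: "\<And>t. D t \<in> borel_measurable M" and D_nonneg: "\<And>t \<xi>. 0 \<le> D t \<xi>"
    and fin: "(\<Sum>t. \<integral>\<^sup>+\<xi>. D t \<xi> \<partial>M) \<noteq> \<infinity>"
  shows "AE \<xi> in M. (\<lambda>t. D t \<xi>) \<longlonglongrightarrow> 0"
proof -
  have "(\<integral>\<^sup>+\<xi>. (\<Sum>t. ennreal (D t \<xi>)) \<partial>M) = (\<Sum>t. \<integral>\<^sup>+\<xi>. D t \<xi> \<partial>M)"
    using D by (intro nn_integral_suminf) auto
  then have "AE \<xi> in M. (\<Sum>t. ennreal (D t \<xi>)) \<noteq> \<infinity>"
    using D fin by (intro nn_integral_PInf_AE) auto
  then show ?thesis
  proof (rule eventually_mono)
    fix \<xi> assume "(\<Sum>t. ennreal (D t \<xi>)) \<noteq> \<infinity>"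
    then have "summable (\<lambda>t. D t \<xi>)"
      using D_nonneg by (intro summable_suminf_not_top) auto
    then show "(\<lambda>t. D t \<xi>) \<longlonglongrightarrow> 0" by (rule summable_LIMSEQ_zero)
  qed
qed

section \<open>The Stochastic Decoupling Method\<close>

locale stochastic_decoupling = prob_space P
  for P :: "'a measure" +
  fixes Fl :: "nat \<Rightarrow> 'a measure"
    and f :: "'v::euclidean_space \<Rightarrow> real" and gf :: "'v \<Rightarrow> 'v"
    and m :: nat and g :: "nat \<Rightarrow> 'v \<Rightarrow> ereal" and R :: "'v \<Rightarrow> ereal"
    and p :: "nat \<Rightarrow> real" and \<eta> \<omega> :: real and Mseq :: "nat \<Rightarrow> real"
    and xs :: 'v and ys :: "nat \<Rightarrow> 'v" and rs :: 'v
    and x0 :: 'v and y0 :: "nat \<Rightarrow> 'v"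
    and x :: "nat \<Rightarrow> 'a \<Rightarrow> 'v" and v :: "nat \<Rightarrow> 'a \<Rightarrow> 'v" and z :: "nat \<Rightarrow> 'a \<Rightarrow> 'v"
    and y :: "nat \<Rightarrow> nat \<Rightarrow> 'a \<Rightarrow> 'v" and j :: "nat \<Rightarrow> 'a \<Rightarrow> nat"
  assumes f_grad: "\<And>u. (f has_derivative (\<lambda>h. gf u \<bullet> h)) (at u)"
    and f_convex: "convex_on UNIV f"
    and g_proper: "\<And>k. k < m \<Longrightarrow> proper_fun (g k)"
    and g_convex: "\<And>k. k < m \<Longrightarrow> convex_fun (g k)"
    and R_proper: "proper_fun R" and R_convex: "convex_fun R"
    and ys_sub: "\<And>k. k < m \<Longrightarrow> ys k \<in> subdiff (g k) xs"
    and rs_sub: "rs \<in> subdiff R xs"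
    and opt: "gf xs + (1 / real m) *\<^sub>R (\<Sum>k<m. ys k) + rs = 0"
    and p_pos: "\<And>k. k < m \<Longrightarrow> p k > 0"
    and p_sum: "(\<Sum>k<m. p k) = 1"
    and eta_pos: "\<eta> > 0" and omega_pos: "\<omega> > 0"
    and x_init: "\<And>\<xi>. x 0 \<xi> = x0"
    and y_init: "\<And>k \<xi>. k < m \<Longrightarrow> y 0 k \<xi> = y0 k"
    and z_step: "\<And>t \<xi>. is_prox R \<eta>
        (x t \<xi> - \<eta> *\<^sub>R v t \<xi> - \<eta> *\<^sub>R ((1 / real m) *\<^sub>R (\<Sum>k<m. y t k \<xi>))) (z t \<xi>)"
    and j_range: "\<And>t \<xi>. j t \<xi> < m"
    and x_step: "\<And>t \<xi>. is_prox (g (j t \<xi>)) (\<eta> / (real m * p (j t \<xi>)))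
        (z t \<xi> + (\<eta> / (real m * p (j t \<xi>))) *\<^sub>R y t (j t \<xi>) \<xi>) (x (Suc t) \<xi>)"
    and y_step: "\<And>t k \<xi>. k < m \<Longrightarrow> y (Suc t) k \<xi> =
        (if k = j t \<xi> then y t k \<xi> + (1 / (\<eta> / (real m * p k))) *\<^sub>R (z t \<xi> - x (Suc t) \<xi>)
         else y t k \<xi>)"
    and Fl_sub: "\<And>t. subalgebra P (Fl t)"
    and x_meas: "\<And>t. x t \<in> borel_measurable (Fl t)"
    and v_meas: "\<And>t. v t \<in> borel_measurable (Fl t)"
    and y_meas: "\<And>t k. k < m \<Longrightarrow> y t k \<in> borel_measurable (Fl t)"
    and j_meas: "\<And>t. j t \<in> measurable (Fl (Suc t)) (count_space UNIV)"
    and j_indep: "\<And>t k A. A \<in> sets (Fl t) \<Longrightarrow>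
        measure P ({\<xi> \<in> space P. j t \<xi> = k} \<inter> A) = p k * measure P A"
    and M_nonneg: "\<And>t. Mseq t \<ge> 0"
    and int_x: "\<And>t. integrable P (\<lambda>\<xi>. (norm (x t \<xi> - xs))\<^sup>2)"
    and int_w: "\<And>t. integrable P (\<lambda>\<xi>. (norm ((x t \<xi> - \<eta> *\<^sub>R v t \<xi>) - (xs - \<eta> *\<^sub>R gf xs)))\<^sup>2)"
    and int_D: "\<And>t. integrable P (\<lambda>\<xi>. bregman f gf (x t \<xi>) xs)"
    and est_a: "\<And>t. (\<integral>\<xi>. (norm ((x t \<xi> - \<eta> *\<^sub>R v t \<xi>) - (xs - \<eta> *\<^sub>R gf xs)))\<^sup>2 \<partial>P) + Mseq (Suc t)
        \<le> (\<integral>\<xi>. (norm (x t \<xi> - xs))\<^sup>2 \<partial>P) - \<omega> * \<eta> * (\<integral>\<xi>. bregman f gf (x t \<xi>) xs \<partial>P) + Mseq t"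
begin

definition dual_step :: "nat \<Rightarrow> real" where
  "dual_step k = \<eta> / (real m * p k)"

definition dual_dist :: "nat \<Rightarrow> 'a \<Rightarrow> real" where
  "dual_dist t \<xi> = (\<Sum>k<m. (dual_step k)\<^sup>2 * (norm (y t k \<xi> - ys k))\<^sup>2)"

definition lyapunov :: "nat \<Rightarrow> 'a \<Rightarrow> real" where
  "lyapunov t \<xi> = (norm (x t \<xi> - xs))\<^sup>2 + dual_dist t \<xi>"

definition w_dist :: "nat \<Rightarrow> 'a \<Rightarrow> real" where
  "w_dist t \<xi> = (norm ((x t \<xi> - \<eta> *\<^sub>R v t \<xi>) - (xs - \<eta> *\<^sub>R gf xs)))\<^sup>2"

text \<open>Bound for \<open>lyapunov (Suc t)\<close> on the event \<open>j t = k\<close>. Unlike \<open>lyapunov (Suc t)\<close> it is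
  \<open>Fl t\<close>-measurable, so the independence of \<open>j t\<close> from \<open>Fl t\<close> can be applied to it.\<close>
definition lyapunov_bound :: "nat \<Rightarrow> nat \<Rightarrow> 'a \<Rightarrow> real" where
  "lyapunov_bound t k \<xi> = (norm (z t \<xi> - xs + dual_step k *\<^sub>R (y t k \<xi> - ys k)))\<^sup>2
     + (dual_dist t \<xi> - (dual_step k)\<^sup>2 * (norm (y t k \<xi> - ys k))\<^sup>2)"

lemma dual_step_pos: "k < m \<Longrightarrow> dual_step k > 0"
  using p_pos eta_pos by (simp add: dual_step_def)

lemma dual_dist_nonneg: "0 \<le> dual_dist t \<xi>"
  by (simp add: dual_dist_def sum_nonneg)

lemma dual_dist_split:
  assumes "k < m"
  shows "dual_dist t \<xi> = (dual_step k)\<^sup>2 * (norm (y t k \<xi> - ys k))\<^sup>2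
    + (\<Sum>i\<in>{..<m} - {k}. (dual_step i)\<^sup>2 * (norm (y t i \<xi> - ys i))\<^sup>2)"
  unfolding dual_dist_def using assms by (intro sum.remove) auto

lemma lyapunov_bound_nonneg: "k < m \<Longrightarrow> 0 \<le> lyapunov_bound t k \<xi>"
  by (simp add: lyapunov_bound_def dual_dist_split sum_nonneg)

lemma lyapunov_bound_eq:
  "lyapunov_bound t k \<xi> = (norm (z t \<xi> - xs))\<^sup>2
    + 2 * dual_step k * ((z t \<xi> - xs) \<bullet> (y t k \<xi> - ys k)) + dual_dist t \<xi>"
  using dot_norm[of "z t \<xi> - xs" "dual_step k *\<^sub>R (y t k \<xi> - ys k)"]
  by (simp add: lyapunov_bound_def power_mult_distrib)

lemma lyapunov_le_bound: "lyapunov (Suc t) \<xi> \<le> lyapunov_bound t (j t \<xi>) \<xi>"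
proof -
  define k where "k = j t \<xi>"
  define c u where "c = dual_step k" and "u = x (Suc t) \<xi>"
  have k: "k < m" and c: "c > 0" using j_range dual_step_pos by (auto simp: k_def c_def)
  have y_new: "y (Suc t) k \<xi> = y t k \<xi> + (1 / c) *\<^sub>R (z t \<xi> - u)"
    using y_step[OF k] by (simp add: k_def c_def u_def dual_step_def)
  have "(norm (u - xs))\<^sup>2 + (norm (z t \<xi> + c *\<^sub>R y t k \<xi> - u - c *\<^sub>R ys k))\<^sup>2
      \<le> (norm (z t \<xi> + c *\<^sub>R y t k \<xi> - xs - c *\<^sub>R ys k))\<^sup>2"
    using x_step[of t \<xi>] ys_sub[OF k] g_proper[OF k] g_convex[OF k] c
    by (intro is_prox_firm_nonexpansive) (simp_all add: k_def c_def u_def dual_step_def)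
  moreover have "z t \<xi> + c *\<^sub>R y t k \<xi> - u - c *\<^sub>R ys k = c *\<^sub>R (y (Suc t) k \<xi> - ys k)"
    using c by (simp add: y_new algebra_simps)
  moreover have "z t \<xi> + c *\<^sub>R y t k \<xi> - xs - c *\<^sub>R ys k = z t \<xi> - xs + c *\<^sub>R (y t k \<xi> - ys k)"
    by (simp add: algebra_simps)
  ultimately have "(norm (u - xs))\<^sup>2 + c\<^sup>2 * (norm (y (Suc t) k \<xi> - ys k))\<^sup>2
      \<le> (norm (z t \<xi> - xs + c *\<^sub>R (y t k \<xi> - ys k)))\<^sup>2"
    using c by (simp add: power_mult_distrib)
  moreover have "(\<Sum>i\<in>{..<m} - {k}. (dual_step i)\<^sup>2 * (norm (y (Suc t) i \<xi> - ys i))\<^sup>2)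
      = (\<Sum>i\<in>{..<m} - {k}. (dual_step i)\<^sup>2 * (norm (y t i \<xi> - ys i))\<^sup>2)"
    using y_step by (intro sum.cong) (auto simp: k_def)
  ultimately have "lyapunov (Suc t) \<xi> \<le> lyapunov_bound t k \<xi>"
    by (simp add: lyapunov_def lyapunov_bound_def dual_dist_split[OF k] c_def u_def)
  then show ?thesis by (simp add: k_def)
qed

lemma prox_R_step_le:
  "(norm (z t \<xi> - xs))\<^sup>2 + 2 * \<eta> * ((z t \<xi> - xs) \<bullet> ((1 / real m) *\<^sub>R (\<Sum>k<m. y t k \<xi> - ys k)))
    \<le> w_dist t \<xi>"
proof -
  define q where "q = (1 / real m) *\<^sub>R (\<Sum>k<m. y t k \<xi>)"
  have "x t \<xi> - \<eta> *\<^sub>R v t \<xi> - \<eta> *\<^sub>R q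
      = (x t \<xi> - \<eta> *\<^sub>R v t \<xi> + \<eta> *\<^sub>R gf xs) - \<eta> *\<^sub>R (q + gf xs)"
    by (simp add: algebra_simps)
  then have "is_prox R \<eta> ((x t \<xi> - \<eta> *\<^sub>R v t \<xi> + \<eta> *\<^sub>R gf xs) - \<eta> *\<^sub>R (q + gf xs)) (z t \<xi>)"
    using z_step[of t \<xi>] unfolding q_def[symmetric] by (simp only:)
  from is_prox_step_le[OF this rs_sub R_proper R_convex eta_pos]
  have "(norm (z t \<xi> - xs))\<^sup>2 + 2 * \<eta> * ((z t \<xi> - xs) \<bullet> (q + gf xs + rs)) \<le> w_dist t \<xi>"
    by (simp add: w_dist_def algebra_simps)
  moreover have "(1 / real m) *\<^sub>R (\<Sum>k<m. y t k \<xi> - ys k) = q + gf xs + rs"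
    using opt by (simp add: q_def sum_subtractf algebra_simps)
  ultimately show ?thesis by (simp only:)
qed

lemma average_lyapunov_bound_le:
  "(\<Sum>k<m. p k * lyapunov_bound t k \<xi>) \<le> w_dist t \<xi> + dual_dist t \<xi>"
proof -
  define d e where "d = z t \<xi> - xs" and "e k = y t k \<xi> - ys k" for k
  have "p k * lyapunov_bound t k \<xi> = p k * ((norm d)\<^sup>2 + dual_dist t \<xi>) + 2 * (\<eta> / real m) * (d \<bullet> e k)"
    if "k < m" for k
  proof -
    have "\<eta> / real m = p k * dual_step k" using p_pos[OF that] by (simp add: dual_step_def)
    then show ?thesis by (simp add: lyapunov_bound_eq d_def e_def algebra_simps)
  qed
  then have "(\<Sum>k<m. p k * lyapunov_bound t k \<xi>)
      = (\<Sum>k<m. p k * ((norm d)\<^sup>2 + dual_dist t \<xi>) + 2 * (\<eta> / real m) * (d \<bullet> e k))"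
    by (intro sum.cong) auto
  also have "\<dots> = (\<Sum>k<m. p k) * ((norm d)\<^sup>2 + dual_dist t \<xi>)
      + 2 * \<eta> * (d \<bullet> ((1 / real m) *\<^sub>R (\<Sum>k<m. e k)))"
    by (simp add: sum.distrib sum_distrib_left sum_distrib_right inner_sum_right)
  also have "\<dots> = (norm d)\<^sup>2 + 2 * \<eta> * (d \<bullet> ((1 / real m) *\<^sub>R (\<Sum>k<m. e k))) + dual_dist t \<xi>"
    by (simp add: p_sum)
  also have "\<dots> \<le> w_dist t \<xi> + dual_dist t \<xi>"
    using prox_R_step_le by (simp add: d_def e_def)
  finally show ?thesis .
qed

lemma z_measurable: "z t \<in> borel_measurable (Fl t)"
proof (rule measurable_is_prox[OF R_proper R_convex eta_pos _ z_step])
  have [measurable]: "(\<lambda>\<xi>. \<Sum>k<m. y t k \<xi>) \<in> borel_measurable (Fl t)"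
    using y_meas by (intro borel_measurable_sum) simp
  note [measurable] = x_meas v_meas
  show "(\<lambda>\<xi>. x t \<xi> - \<eta> *\<^sub>R v t \<xi> - \<eta> *\<^sub>R ((1 / real m) *\<^sub>R (\<Sum>k<m. y t k \<xi>)))
      \<in> borel_measurable (Fl t)"
    by measurable
qed

lemma dual_dist_measurable: "dual_dist t \<in> borel_measurable (Fl t)"
  unfolding dual_dist_def[abs_def]
proof (intro borel_measurable_sum)
  fix k assume "k \<in> {..<m}"
  with y_meas have [measurable]: "y t k \<in> borel_measurable (Fl t)" by simp
  show "(\<lambda>\<xi>. (dual_step k)\<^sup>2 * (norm (y t k \<xi> - ys k))\<^sup>2) \<in> borel_measurable (Fl t)"
    by measurable
qed

lemma lyapunov_bound_measurable: "k < m \<Longrightarrow> lyapunov_bound t k \<in> borel_measurable (Fl t)"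
  using z_measurable y_meas dual_dist_measurable unfolding lyapunov_bound_def[abs_def] by measurable

lemma expected_lyapunov_step:
  "(\<integral>\<^sup>+\<xi>. lyapunov (Suc t) \<xi> \<partial>P)
    \<le> (\<integral>\<^sup>+\<xi>. w_dist t \<xi> \<partial>P) + (\<integral>\<^sup>+\<xi>. dual_dist t \<xi> \<partial>P)"
proof -
  have [measurable]: "j t \<in> measurable P (count_space UNIV)"
    using measurable_from_subalg[OF Fl_sub j_meas] .
  have [measurable]: "w_dist t \<in> borel_measurable P"
    using int_w[of t] unfolding w_dist_def[abs_def] by auto
  have [measurable]: "dual_dist t \<in> borel_measurable P"
    using measurable_from_subalg[OF Fl_sub dual_dist_measurable] .
  have "(\<integral>\<^sup>+\<xi>. lyapunov (Suc t) \<xi> \<partial>P)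
      \<le> (\<integral>\<^sup>+\<xi>. (\<Sum>k<m. ennreal (p k) * ennreal (lyapunov_bound t k \<xi>)) \<partial>P)"
  proof (rule nn_integral_random_index_le[OF Fl_sub, where J = "j t"])
    show "emeasure P ({\<xi> \<in> space P. j t \<xi> = k} \<inter> A) = ennreal (p k) * emeasure P A"
      if "k \<in> {..<m}" and "A \<in> sets (Fl t)" for k A
      using j_indep[OF that(2), of k] p_pos[of k] that by (simp add: emeasure_eq_measure ennreal_mult)
    show "(\<lambda>\<xi>. ennreal (lyapunov_bound t k \<xi>)) \<in> borel_measurable (Fl t)" if "k \<in> {..<m}" for k
      by (rule measurable_compose[OF lyapunov_bound_measurable measurable_ennreal]) (use that in simp)
    show "ennreal (lyapunov (Suc t) \<xi>) \<le> ennreal (lyapunov_bound t (j t \<xi>) \<xi>)" for \<xi>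
      by (rule ennreal_leI[OF lyapunov_le_bound])
    show "{\<xi> \<in> space P. j t \<xi> = k} \<in> sets P" for k
      by measurable
  qed (use j_range in auto)
  also have "\<dots> \<le> (\<integral>\<^sup>+\<xi>. ennreal (w_dist t \<xi>) + ennreal (dual_dist t \<xi>) \<partial>P)"
  proof (rule nn_integral_mono)
    fix \<xi>
    have "(\<Sum>k<m. ennreal (p k) * ennreal (lyapunov_bound t k \<xi>)) = (\<Sum>k<m. ennreal (p k * lyapunov_bound t k \<xi>))"
      using p_pos lyapunov_bound_nonneg by (intro sum.cong refl) (simp add: ennreal_mult less_imp_le)
    also have "\<dots> = ennreal (\<Sum>k<m. p k * lyapunov_bound t k \<xi>)"
      using p_pos lyapunov_bound_nonneg by (intro sum_ennreal) (simp add: less_imp_le)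
    also have "\<dots> \<le> ennreal (w_dist t \<xi>) + ennreal (dual_dist t \<xi>)"
      using average_lyapunov_bound_le dual_dist_nonneg
      by (simp add: w_dist_def ennreal_plus[symmetric] ennreal_leI del: ennreal_plus)
    finally show "(\<Sum>k<m. ennreal (p k) * ennreal (lyapunov_bound t k \<xi>))
        \<le> ennreal (w_dist t \<xi>) + ennreal (dual_dist t \<xi>)" .
  qed
  also have "\<dots> = (\<integral>\<^sup>+\<xi>. w_dist t \<xi> \<partial>P) + (\<integral>\<^sup>+\<xi>. dual_dist t \<xi> \<partial>P)"
    by (rule nn_integral_add) measurable
  finally show ?thesis .
qed

lemma nn_integral_lyapunov:
  "(\<integral>\<^sup>+\<xi>. lyapunov t \<xi> \<partial>P)
    = ennreal (\<integral>\<xi>. (norm (x t \<xi> - xs))\<^sup>2 \<partial>P) + (\<integral>\<^sup>+\<xi>. dual_dist t \<xi> \<partial>P)"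
proof -
  have "dual_dist t \<in> borel_measurable P"
    using measurable_from_subalg[OF Fl_sub dual_dist_measurable] .
  moreover have "(\<lambda>\<xi>. (norm (x t \<xi> - xs))\<^sup>2) \<in> borel_measurable P"
    using int_x by auto
  ultimately have "(\<integral>\<^sup>+\<xi>. lyapunov t \<xi> \<partial>P)
      = (\<integral>\<^sup>+\<xi>. (norm (x t \<xi> - xs))\<^sup>2 \<partial>P) + (\<integral>\<^sup>+\<xi>. dual_dist t \<xi> \<partial>P)"
    unfolding lyapunov_def
    by (subst nn_integral_add[symmetric]) (auto simp: dual_dist_nonneg intro!: nn_integral_cong ennreal_plus)
  then show ?thesis
    using int_x by (simp add: nn_integral_eq_integral)
qed

lemma estimator_condition_ennreal:
  "(\<integral>\<^sup>+\<xi>. w_dist t \<xi> \<partial>P) + ennreal (Mseq (Suc t))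
      + ennreal (\<omega> * \<eta>) * (\<integral>\<^sup>+\<xi>. bregman f gf (x t \<xi>) xs \<partial>P)
    \<le> ennreal (\<integral>\<xi>. (norm (x t \<xi> - xs))\<^sup>2 \<partial>P) + ennreal (Mseq t)"
proof -
  have D_nonneg: "0 \<le> bregman f gf u xs" for u
    by (rule bregman_nonneg[OF f_grad f_convex])
  have "(\<integral>\<^sup>+\<xi>. w_dist t \<xi> \<partial>P) = ennreal (\<integral>\<xi>. w_dist t \<xi> \<partial>P)"
    and "(\<integral>\<^sup>+\<xi>. bregman f gf (x t \<xi>) xs \<partial>P) = ennreal (\<integral>\<xi>. bregman f gf (x t \<xi>) xs \<partial>P)"
    using int_w int_D D_nonneg unfolding w_dist_def by (auto intro: nn_integral_eq_integral)
  moreover have "0 \<le> (\<integral>\<xi>. w_dist t \<xi> \<partial>P)" "0 \<le> (\<integral>\<xi>. (norm (x t \<xi> - xs))\<^sup>2 \<partial>P)"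
    "0 \<le> (\<integral>\<xi>. bregman f gf (x t \<xi>) xs \<partial>P)"
    unfolding w_dist_def using D_nonneg by (auto intro: integral_nonneg_AE)
  ultimately show ?thesis
    using est_a[of t] M_nonneg omega_pos eta_pos
    by (simp add: w_dist_def ennreal_plus[symmetric] ennreal_mult[symmetric] ennreal_leI del: ennreal_plus)
qed

text \<open>The dual part of \<open>lyapunov\<close> need not be integrable, so expectations are taken in \<open>ennreal\<close>.\<close>
definition potential :: "nat \<Rightarrow> ennreal" where
  "potential t = (\<integral>\<^sup>+\<xi>. lyapunov t \<xi> \<partial>P) + ennreal (Mseq t)"

lemma potential_descent:
  "potential (Suc t) + ennreal (\<omega> * \<eta>) * (\<integral>\<^sup>+\<xi>. bregman f gf (x t \<xi>) xs \<partial>P) \<le> potential t"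
proof -
  have "potential (Suc t) + ennreal (\<omega> * \<eta>) * (\<integral>\<^sup>+\<xi>. bregman f gf (x t \<xi>) xs \<partial>P)
      \<le> ((\<integral>\<^sup>+\<xi>. w_dist t \<xi> \<partial>P) + ennreal (Mseq (Suc t))
          + ennreal (\<omega> * \<eta>) * (\<integral>\<^sup>+\<xi>. bregman f gf (x t \<xi>) xs \<partial>P))
        + (\<integral>\<^sup>+\<xi>. dual_dist t \<xi> \<partial>P)"
    using expected_lyapunov_step[of t] unfolding potential_def
    by (simp add: ac_simps add_right_mono)
  also have "\<dots> \<le> (ennreal (\<integral>\<xi>. (norm (x t \<xi> - xs))\<^sup>2 \<partial>P) + ennreal (Mseq t))
      + (\<integral>\<^sup>+\<xi>. dual_dist t \<xi> \<partial>P)"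
    using estimator_condition_ennreal by (rule add_right_mono)
  also have "\<dots> = potential t"
    by (simp add: potential_def nn_integral_lyapunov ac_simps)
  finally show ?thesis .
qed

lemma AE_bregman_tendsto_zero: "AE \<xi> in P. (\<lambda>t. bregman f gf (x t \<xi>) xs) \<longlonglongrightarrow> 0"
proof (rule AE_LIMSEQ_zero_if_suminf_nn_integral_finite)
  show "(\<lambda>\<xi>. bregman f gf (x t \<xi>) xs) \<in> borel_measurable P" for t
    using int_D by auto
  show "0 \<le> bregman f gf (x t \<xi>) xs" for t \<xi>
    by (rule bregman_nonneg[OF f_grad f_convex])
  have "ennreal (\<omega> * \<eta>) * (\<Sum>t. \<integral>\<^sup>+\<xi>. bregman f gf (x t \<xi>) xs \<partial>P) \<le> potential 0"
    using suminf_le_of_descent[where \<Psi> = potential, OF potential_descent] by simp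
  moreover have "potential 0 < \<infinity>"
    by (simp add: potential_def lyapunov_def dual_dist_def x_init y_init emeasure_space_1)
  moreover have "ennreal (\<omega> * \<eta>) \<noteq> 0"
    using omega_pos eta_pos by simp
  ultimately show "(\<Sum>t. \<integral>\<^sup>+\<xi>. bregman f gf (x t \<xi>) xs \<partial>P) \<noteq> \<infinity>"
    by (auto simp: ennreal_mult_eq_top_iff top_unique)
qed

end

theorem theorem9:
  fixes P :: "'a measure"
    and Fl :: "nat \<Rightarrow> 'a measure"
    and f :: "'v::euclidean_space \<Rightarrow> real" and gf :: "'v \<Rightarrow> 'v" and L :: real
    and m :: nat and g :: "nat \<Rightarrow> 'v \<Rightarrow> ereal" and R :: "'v \<Rightarrow> ereal"
    and p :: "nat \<Rightarrow> real" and \<eta> \<eta>0 \<omega> :: real and Mseq :: "nat \<Rightarrow> real"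
    and xs :: 'v and ys :: "nat \<Rightarrow> 'v" and rs :: 'v
    and x0 :: 'v and y0 :: "nat \<Rightarrow> 'v"
    and x :: "nat \<Rightarrow> 'a \<Rightarrow> 'v" and v :: "nat \<Rightarrow> 'a \<Rightarrow> 'v" and z :: "nat \<Rightarrow> 'a \<Rightarrow> 'v"
    and y :: "nat \<Rightarrow> nat \<Rightarrow> 'a \<Rightarrow> 'v" and j :: "nat \<Rightarrow> 'a \<Rightarrow> nat"
  assumes P: "prob_space P"
    (* problem data *)
    and f_grad: "\<And>u. (f has_derivative (\<lambda>h. gf u \<bullet> h)) (at u)"
    and f_convex: "convex_on UNIV f"
    and f_smooth: "\<And>u w. f u \<le> f w + gf w \<bullet> (u - w) + L / 2 * (norm (u - w))\<^sup>2"
    and m_pos: "m > 0"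
    and g_pcc: "\<And>k. k < m \<Longrightarrow> proper_closed_convex (g k)"
    and R_pcc: "proper_closed_convex R"
    (* optimality assumption *)
    and xs_min: "\<And>u. objective f m g R xs \<le> objective f m g R u"
    and ys_sub: "\<And>k. k < m \<Longrightarrow> ys k \<in> subdiff (g k) xs"
    and rs_sub: "rs \<in> subdiff R xs"
    and opt: "gf xs + (1 / real m) *\<^sub>R (\<Sum>k<m. ys k) + rs = 0"
    (* parameters *)
    and p_pos: "\<And>k. k < m \<Longrightarrow> p k > 0"
    and p_sum: "(\<Sum>k<m. p k) = 1"
    and eta_pos: "\<eta> > 0" and eta0_pos: "\<eta>0 > 0" and eta_le: "\<eta> \<le> \<eta>0"
    and omega_pos: "\<omega> > 0"
    (* Stochastic Decoupling Method, pathwise *)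
    and x_init: "\<And>\<xi>. x 0 \<xi> = x0"
    and y_init: "\<And>k \<xi>. k < m \<Longrightarrow> y 0 k \<xi> = y0 k"
    and z_step: "\<And>t \<xi>. is_prox R \<eta>
        (x t \<xi> - \<eta> *\<^sub>R v t \<xi> - \<eta> *\<^sub>R ((1 / real m) *\<^sub>R (\<Sum>k<m. y t k \<xi>))) (z t \<xi>)"
    and j_range: "\<And>t \<xi>. j t \<xi> < m"
    and x_step: "\<And>t \<xi>. is_prox (g (j t \<xi>)) (\<eta> / (real m * p (j t \<xi>)))
        (z t \<xi> + (\<eta> / (real m * p (j t \<xi>))) *\<^sub>R y t (j t \<xi>) \<xi>) (x (Suc t) \<xi>)"
    and y_step: "\<And>t k \<xi>. k < m \<Longrightarrow> y (Suc t) k \<xi> =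
        (if k = j t \<xi> then y t k \<xi> + (1 / (\<eta> / (real m * p k))) *\<^sub>R (z t \<xi> - x (Suc t) \<xi>)
         else y t k \<xi>)"
    (* randomness: filtration of the past, j_t drawn independently of it with law p *)
    and Fl_sub: "\<And>t. subalgebra P (Fl t)"
    and Fl_mono: "\<And>t. sets (Fl t) \<subseteq> sets (Fl (Suc t))"
    and x_meas: "\<And>t. x t \<in> borel_measurable (Fl t)"
    and v_meas: "\<And>t. v t \<in> borel_measurable (Fl t)"
    and y_meas: "\<And>t k. k < m \<Longrightarrow> y t k \<in> borel_measurable (Fl t)"
    and j_meas: "\<And>t. j t \<in> measurable (Fl (Suc t)) (count_space UNIV)"
    and j_indep: "\<And>t k A. A \<in> sets (Fl t) \<Longrightarrow>
        measure P ({\<xi> \<in> space P. j t \<xi> = k} \<inter> A) = p k * measure P A"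
    (* gradient-estimator condition, part (a), at the chosen stepsize *)
    and M_nonneg: "\<And>t. Mseq t \<ge> 0"
    and int_x: "\<And>t. integrable P (\<lambda>\<xi>. (norm (x t \<xi> - xs))\<^sup>2)"
    and int_w: "\<And>t. integrable P (\<lambda>\<xi>. (norm ((x t \<xi> - \<eta> *\<^sub>R v t \<xi>) - (xs - \<eta> *\<^sub>R gf xs)))\<^sup>2)"
    and int_D: "\<And>t. integrable P (\<lambda>\<xi>. bregman f gf (x t \<xi>) xs)"
    and est_a: "\<And>t. (\<integral>\<xi>. (norm ((x t \<xi> - \<eta> *\<^sub>R v t \<xi>) - (xs - \<eta> *\<^sub>R gf xs)))\<^sup>2 \<partial>P) + Mseq (Suc t)
        \<le> (\<integral>\<xi>. (norm (x t \<xi> - xs))\<^sup>2 \<partial>P) - \<omega> * \<eta> * (\<integral>\<xi>. bregman f gf (x t \<xi>) xs \<partial>P) + Mseq t"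
  shows "AE \<xi> in P. (\<lambda>t. bregman f gf (x t \<xi>) xs) \<longlonglongrightarrow> 0"
proof -
  have g_parts: "proper_fun (g k)" "convex_fun (g k)" if "k < m" for k
    using g_pcc[OF that] by (simp_all add: proper_closed_convex_def)
  have R_parts: "proper_fun R" "convex_fun R"
    using R_pcc by (simp_all add: proper_closed_convex_def)
  interpret stochastic_decoupling P Fl f gf m g R p \<eta> \<omega> Mseq xs ys rs x0 y0 x v z y j
    by (intro stochastic_decoupling.intro stochastic_decoupling_axioms.intro) (fact assms g_parts R_parts)+
  show ?thesis by (rule AE_bregman_tendsto_zero)
qed

end
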